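(* Let $V'$ be a finite set of nodes, $k\ge 1$ an integer (number of clusters, labelled $1,\dots,k$), and $E'^{\mathrm{CL}}$ a set of unordered pairs $\{i,j\}$ of distinct nodes of $V'$ (hard cannot-link constraints). Let $H=(V',E'^{\mathrm{CL}})$ and $\Delta(H)=\max_{i\in V'}\deg_H(i)$. Suppose a feasible assignment exists, i.e. there is a map $c:V'\to\{1,\dots,k\}$ with $c(i)\neq c(j)$ for all $\{i,j\}\in E'^{\mathrm{CL}}$. Let $q$ be an integer with $q\ge \min(1+\Delta(H),k)$ (and $q\le k$), and for every $i\in V'$ let $L_i\subseteq\{1,\dots,k\}$ contain the $q$ clusters whose centers are nearest to node $i$ (possibly together with additional clusters). Then the model (R($q$)MBLP) described in the context has a feasible solution, and hence solving it yields an assignment of every node to a cluster that satisfies all hard cannot-link constraints.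
   Context: Setting: nodes $i\in V'$ have feature vectors and positive integer weights $s_i$; there are $k$ cluster centers, and $d_{il}\ge 0$ denotes the squared Euclidean distance between node $i$ and the center of cluster $l$. Besides the hard cannot-link pairs $E'^{\mathrm{CL}}$, there are sets $E'^{\mathrm{SCL}}$ and $E'^{\mathrm{SML}}$ of pairs (soft cannot-link and soft must-link constraints) with weights $w'_{ij}>0$, and a penalty $P>0$. Given the sets $L_i$, define $E''^{\mathrm{CL}}=\{\{i,j\}\in E'^{\mathrm{CL}}: L_i\cap L_j\neq\emptyset\}$, $E''^{\mathrm{SCL}}=\{\{i,j\}\in E'^{\mathrm{SCL}}: L_i\cap L_j\neq\emptyset\}$, and let $E''^{\mathrm{SML}}\subseteq E'^{\mathrm{SML}}$. The model (R($q$)MBLP) is: minimize $\sum_{i\in V'}\sum_{l\in L_i}s_i d_{il}x_{il}+P\big(\sum_{\{i,j\}\in E''^{\mathrm{SCL}}}w'_{ij}y_{ij}+\sum_{\{i,j\}\in E''^{\mathrm{SML}}}w'_{ij}z_{ij}\big)$ subject to $\sum_{l\in L_i}x_{il}=1$ for all $i\in V'$; $x_{il}+x_{jl}\le 1$ for all $\{i,j\}\in E''^{\mathrm{CL}}$, $l\in L_i\cap L_j$; $x_{il}+x_{jl}\le 1+y_{ij}$ for all $\{i,j\}\in E''^{\mathrm{SCL}}$, $l\in L_i\cap L_j$; $x_{il}-x_{jl}\le z_{ij}$ for all $\{i,j\}\in E''^{\mathrm{SML}}$, $l\in L_i\cap L_j$; $x_{il}\le z_{ij}$ for $\{i,j\}\in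 E''^{\mathrm{SML}}$, $l\in L_i\setminus L_j$; $x_{jl}\le z_{ij}$ for $\{i,j\}\in E''^{\mathrm{SML}}$, $l\in L_j\setminus L_i$; $x_{il}\in\{0,1\}$ for $i\in V'$, $l\in L_i$; $y_{ij}\ge 0$, $z_{ij}\ge 0$. A solution assigns node $i$ to the unique cluster $l\in L_i$ with $x_{il}=1$. *)

theory Defs
  imports Complex_Main
begin

definition pairs_on :: "'a set \<Rightarrow> 'a set set" where
  "pairs_on V = {{i, j} | i j. i \<in> V \<and> j \<in> V \<and> i \<noteq> j}"

definition deg :: "'a set set \<Rightarrow> 'a \<Rightarrow> nat" where
  "deg E i = card {j. {i, j} \<in> E}"

definition max_deg :: "'a set \<Rightarrow> 'a set set \<Rightarrow> nat" where
  "max_deg V E = Max (insert 0 (deg E ` V))"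

definition nearest_q :: "nat \<Rightarrow> nat \<Rightarrow> ('a \<Rightarrow> nat \<Rightarrow> real) \<Rightarrow> 'a \<Rightarrow> nat set \<Rightarrow> bool" where
  "nearest_q k q d i S \<longleftrightarrow> S \<subseteq> {1..k} \<and> card S = q \<and>
     (\<forall>l\<in>S. \<forall>l'\<in>{1..k} - S. d i l \<le> d i l')"

definition reduce_edges :: "('a \<Rightarrow> nat set) \<Rightarrow> 'a set set \<Rightarrow> 'a set set" where
  "reduce_edges L E = {e \<in> E. \<forall>i j. e = {i, j} \<longrightarrow> L i \<inter> L j \<noteq> {}}"

definition RMBLP_feasible ::
  "'a set \<Rightarrow> ('a \<Rightarrow> nat set) \<Rightarrow> 'a set set \<Rightarrow> 'a set set \<Rightarrow> 'a set set
   \<Rightarrow> ('a \<Rightarrow> nat \<Rightarrow> real) \<Rightarrow> ('a set \<Rightarrow> real) \<Rightarrow> ('a set \<Rightarrow> real) \<Rightarrow> bool" where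
  "RMBLP_feasible V L ECL ESCL ESML2 x y z \<longleftrightarrow>
     (\<forall>i\<in>V. (\<Sum>l\<in>L i. x i l) = 1) \<and>
     (\<forall>i\<in>V. \<forall>l\<in>L i. x i l \<in> {0, 1}) \<and>
     (\<forall>i j l. {i, j} \<in> reduce_edges L ECL \<longrightarrow> l \<in> L i \<inter> L j \<longrightarrow> x i l + x j l \<le> 1) \<and>
     (\<forall>i j l. {i, j} \<in> reduce_edges L ESCL \<longrightarrow> l \<in> L i \<inter> L j \<longrightarrow> x i l + x j l \<le> 1 + y {i, j}) \<and>
     (\<forall>i j l. {i, j} \<in> ESML2 \<longrightarrow> l \<in> L i \<inter> L j \<longrightarrow> x i l - x j l \<le> z {i, j}) \<and>
     (\<forall>i j l. {i, j} \<in> ESML2 \<longrightarrow> l \<in> L i - L j \<longrightarrow> x i l \<le> z {i, j}) \<and>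
     (\<forall>e \<in> reduce_edges L ESCL. y e \<ge> 0) \<and>
     (\<forall>e \<in> ESML2. z e \<ge> 0)"

definition assigned :: "('a \<Rightarrow> nat set) \<Rightarrow> ('a \<Rightarrow> nat \<Rightarrow> real) \<Rightarrow> 'a \<Rightarrow> nat" where
  "assigned L x i = (THE l. l \<in> L i \<and> x i l = 1)"

end

theory Submission
  imports Defs
begin

text \<open>If \<open>1 + \<Delta>(H) \<le> q\<close>, every candidate list \<open>L i\<close> is longer than the degree of \<open>i\<close> in the
  cannot-link graph, so a greedy list coloring picks a cluster from each \<open>L i\<close> that no neighbour
  uses. Otherwise \<open>k \<le> q\<close>, every \<open>L i\<close> contains all clusters, and the given feasible assignment
  works. The 0/1 indicator of such a coloring, with all \<open>y\<close> and \<open>z\<close> equal to 1, is feasible.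
  Conversely, in any feasible solution the binary assignment constraint singles out one cluster
  per node, and two cannot-linked nodes sharing a cluster would have it in \<open>L i \<inter> L j\<close>, so their
  pair survives the reduction and its constraint forbids the sharing.\<close>

lemma pairs_on_memD:
  assumes "{i, j} \<in> pairs_on V"
  shows "i \<in> V" "j \<in> V" "i \<noteq> j"
  using assms unfolding pairs_on_def by (auto simp: doubleton_eq_iff)

lemma finite_neighbours:
  assumes "finite V" "E \<subseteq> pairs_on V"
  shows "finite {j. {i, j} \<in> E}"
proof (rule finite_subset[OF _ assms(1)])
  show "{j. {i, j} \<in> E} \<subseteq> V"
  proof
    fix j assume "j \<in> {j. {i, j} \<in> E}"
    then have "{i, j} \<in> pairs_on V" using assms(2) by blast
    then show "j \<in> V" by (rule pairs_on_memD(2))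
  qed
qed

lemma deg_le_max_deg:
  assumes "finite V" "i \<in> V"
  shows "deg E i \<le> max_deg V E"
  unfolding max_deg_def using assms by (intro Max_ge) auto

lemma reduce_edges_memI:
  assumes "{i, j} \<in> E" "L i \<inter> L j \<noteq> {}"
  shows "{i, j} \<in> reduce_edges L E"
  using assms unfolding reduce_edges_def by (auto simp: doubleton_eq_iff)

lemma reduce_edges_memD:
  assumes "{i, j} \<in> reduce_edges L E"
  shows "{i, j} \<in> E"
  using assms unfolding reduce_edges_def by auto

lemma exists_not_in_smaller_set:
  assumes "finite A" "card A < card B"
  shows "\<exists>b\<in>B. b \<notin> A"
  using assms card_mono[of A B] by (meson linorder_not_less subsetI)

lemma list_coloring_on:
  assumes "finite F"
    and "\<forall>i\<in>F. finite {j. {i, j} \<in> E} \<and> deg E i < card (L i)"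
  shows "\<exists>col. (\<forall>i\<in>F. col i \<in> L i) \<and>
           (\<forall>i\<in>F. \<forall>j\<in>F. {i, j} \<in> E \<longrightarrow> i \<noteq> j \<longrightarrow> col i \<noteq> col j)"
  using assms
proof (induction F rule: finite_induct)
  case empty
  show ?case by auto
next
  case (insert a F)
  then obtain col where col_in: "\<forall>i\<in>F. col i \<in> L i"
    and col_proper: "\<forall>i\<in>F. \<forall>j\<in>F. {i, j} \<in> E \<longrightarrow> i \<noteq> j \<longrightarrow> col i \<noteq> col j"
    by auto
  define N where "N = {j. {a, j} \<in> E}"
  have "finite N" and "card N < card (L a)"
    using insert.prems unfolding N_def deg_def by auto
  then have "card (col ` (N \<inter> F)) < card (L a)"
    using card_image_le[of "N \<inter> F" col] card_mono[of N "N \<inter> F"] by auto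
  then obtain l where l: "l \<in> L a" "l \<notin> col ` (N \<inter> F)"
    using exists_not_in_smaller_set \<open>finite N\<close> by blast
  have l_new: "l \<noteq> col j" if "j \<in> F" "{a, j} \<in> E" for j
    using l that unfolding N_def by blast
  have "(col(a := l)) i \<noteq> (col(a := l)) j"
    if ij: "i \<in> insert a F" "j \<in> insert a F" "{i, j} \<in> E" "i \<noteq> j" for i j
  proof -
    consider "i = a" "j \<in> F" | "j = a" "i \<in> F" | "i \<in> F" "j \<in> F"
      using ij by auto
    then show ?thesis
    proof cases
      case 1
      then show ?thesis using l_new ij(3) insert.hyps(2) by auto
    next
      case 2
      then have "{a, i} \<in> E" using ij(3) by (simp add: insert_commute)
      then show ?thesis using l_new 2 insert.hyps(2) by auto
    next
      case 3
      then show ?thesis using col_proper ij(3,4) insert.hyps(2) by auto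
    qed
  qed
  moreover have "\<forall>i\<in>insert a F. (col(a := l)) i \<in> L i"
    using col_in l(1) insert.hyps(2) by auto
  ultimately show ?case by blast
qed

lemma list_coloring:
  assumes "finite V" "E \<subseteq> pairs_on V"
    and "\<forall>i\<in>V. deg E i < card (L i)"
  shows "\<exists>col. (\<forall>i\<in>V. col i \<in> L i) \<and> (\<forall>i j. {i, j} \<in> E \<longrightarrow> col i \<noteq> col j)"
proof -
  have "\<forall>i\<in>V. finite {j. {i, j} \<in> E} \<and> deg E i < card (L i)"
    using assms(3) finite_neighbours[OF assms(1,2)] by blast
  from list_coloring_on[OF assms(1) this] obtain col where "\<forall>i\<in>V. col i \<in> L i"
    and proper: "\<forall>i\<in>V. \<forall>j\<in>V. {i, j} \<in> E \<longrightarrow> i \<noteq> j \<longrightarrow> col i \<noteq> col j"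
    by blast
  moreover have "col i \<noteq> col j" if "{i, j} \<in> E" for i j
  proof -
    have "{i, j} \<in> pairs_on V" using that assms(2) by blast
    then show ?thesis using proper that pairs_on_memD[of i j V] by blast
  qed
  ultimately show ?thesis by blast
qed

lemma card_candidates_ge:
  assumes "nearest_q k q d i S" "S \<subseteq> L" "L \<subseteq> {1..k}"
  shows "q \<le> card L"
proof -
  have "q = card S" using assms(1) unfolding nearest_q_def by simp
  also have "\<dots> \<le> card L"
    using assms(2,3) by (intro card_mono) (auto intro: finite_subset)
  finally show ?thesis .
qed

lemma coloring_from_candidates:
  assumes "finite V" "E \<subseteq> pairs_on V"
    and "\<exists>c. (\<forall>i\<in>V. c i \<in> {1..k}) \<and> (\<forall>i j. {i, j} \<in> E \<longrightarrow> c i \<noteq> c j)"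
    and "min (1 + max_deg V E) k \<le> q"
    and L: "\<forall>i\<in>V. L i \<subseteq> {1..k} \<and> q \<le> card (L i)"
  shows "\<exists>col. (\<forall>i\<in>V. col i \<in> L i) \<and> (\<forall>i j. {i, j} \<in> E \<longrightarrow> col i \<noteq> col j)"
proof (cases "1 + max_deg V E \<le> q")
  case True
  have "deg E i < card (L i)" if "i \<in> V" for i
    using deg_le_max_deg[OF assms(1) that, of E] True L that by fastforce
  then show ?thesis using list_coloring[OF assms(1,2)] by blast
next
  case False
  then have "k \<le> q" using assms(4) by linarith
  have "L i = {1..k}" if "i \<in> V" for i
    using L that \<open>k \<le> q\<close> by (intro card_seteq) auto
  then show ?thesis using assms(3) by auto
qed

lemma RMBLP_feasible_indicator:
  assumes "\<forall>i\<in>V. finite (L i) \<and> col i \<in> L i"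
    and proper: "\<forall>i j. {i, j} \<in> ECL \<longrightarrow> col i \<noteq> col j"
  defines "x \<equiv> \<lambda>i l. if l = col i then 1 else 0"
  shows "RMBLP_feasible V L ECL ESCL ESML2 x (\<lambda>_. 1) (\<lambda>_. 1)"
  unfolding RMBLP_feasible_def
proof (intro conjI)
  show "\<forall>i\<in>V. (\<Sum>l\<in>L i. x i l) = 1"
    using assms(1) unfolding x_def by simp
  show "\<forall>i j l. {i, j} \<in> reduce_edges L ECL \<longrightarrow> l \<in> L i \<inter> L j \<longrightarrow> x i l + x j l \<le> 1"
  proof (intro allI impI)
    fix i j l assume "{i, j} \<in> reduce_edges L ECL"
    then have "col i \<noteq> col j" by (rule proper[rule_format, OF reduce_edges_memD])
    then show "x i l + x j l \<le> 1" unfolding x_def by simp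
  qed
qed (simp_all add: x_def)

lemma sum_binary_eq_1_imp_ex1:
  fixes f :: "'b \<Rightarrow> 'c::semiring_char_0"
  assumes "finite A" "\<forall>a\<in>A. f a \<in> {0, 1}" "(\<Sum>a\<in>A. f a) = 1"
  shows "\<exists>!a. a \<in> A \<and> f a = 1"
proof -
  have "(\<Sum>a\<in>A. f a) = (\<Sum>a\<in>A. if f a = 1 then 1 else 0)"
    using assms(2) by (intro sum.cong) auto
  also have "\<dots> = of_nat (card {a \<in> A. f a = 1})"
    using assms(1) by (simp add: sum.If_cases Int_def)
  finally have "card {a \<in> A. f a = 1} = 1" using assms(3) by simp
  then obtain a where "{a \<in> A. f a = 1} = {a}" using card_1_singletonE by blast
  then show ?thesis by (auto simp: set_eq_iff)
qed

lemma RMBLP_feasible_assigned: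
  assumes "RMBLP_feasible V L ECL ESCL ESML2 x y z" "i \<in> V" "finite (L i)"
  shows "assigned L x i \<in> L i \<and> x i (assigned L x i) = 1"
proof -
  have "\<exists>!l. l \<in> L i \<and> x i l = 1"
    using assms unfolding RMBLP_feasible_def by (intro sum_binary_eq_1_imp_ex1) auto
  then show ?thesis unfolding assigned_def by (rule theI')
qed

lemma RMBLP_feasible_assigned_cannot_link:
  assumes feasible: "RMBLP_feasible V L ECL ESCL ESML2 x y z"
    and "ECL \<subseteq> pairs_on V" "\<forall>i\<in>V. finite (L i)" and edge: "{i, j} \<in> ECL"
  shows "assigned L x i \<noteq> assigned L x j"
proof
  assume same: "assigned L x i = assigned L x j"
  let ?l = "assigned L x i"
  have "{i, j} \<in> pairs_on V" using assms(2) edge by blast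
  then have "i \<in> V" "j \<in> V" by (rule pairs_on_memD)+
  have li: "?l \<in> L i" "x i ?l = 1"
    using RMBLP_feasible_assigned[OF feasible] assms(3) \<open>i \<in> V\<close> by blast+
  have lj: "?l \<in> L j" "x j ?l = 1"
    unfolding same using RMBLP_feasible_assigned[OF feasible] assms(3) \<open>j \<in> V\<close> by blast+
  from li lj have "{i, j} \<in> reduce_edges L ECL"
    by (intro reduce_edges_memI[OF edge]) blast
  then have "x i ?l + x j ?l \<le> 1"
    using feasible li(1) lj(1) unfolding RMBLP_feasible_def by blast
  with li(2) lj(2) show False by simp
qed

theorem lemma1:
  fixes V :: "'a set" and k q :: nat and ECL ESCL ESML ESML2 :: "'a set set"
    and d :: "'a \<Rightarrow> nat \<Rightarrow> real" and L :: "'a \<Rightarrow> nat set"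
  assumes "finite V" and "k \<ge> 1"
    and "ECL \<subseteq> pairs_on V" and "ESCL \<subseteq> pairs_on V" and "ESML \<subseteq> pairs_on V"
    and "ESML2 \<subseteq> ESML"
    and "\<forall>i\<in>V. \<forall>l\<in>{1..k}. d i l \<ge> 0"
    and "\<exists>c. (\<forall>i\<in>V. c i \<in> {1..k}) \<and> (\<forall>i j. {i, j} \<in> ECL \<longrightarrow> c i \<noteq> c j)"
    and "min (1 + max_deg V ECL) k \<le> q" and "q \<le> k"
    and "\<forall>i\<in>V. L i \<subseteq> {1..k} \<and> (\<exists>S. nearest_q k q d i S \<and> S \<subseteq> L i)"
  shows "(\<exists>x y z. RMBLP_feasible V L ECL ESCL ESML2 x y z) \<and>
         (\<forall>x y z. RMBLP_feasible V L ECL ESCL ESML2 x y z \<longrightarrow>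
            (\<forall>i\<in>V. assigned L x i \<in> L i \<and> x i (assigned L x i) = 1) \<and>
            (\<forall>i j. {i, j} \<in> ECL \<longrightarrow> assigned L x i \<noteq> assigned L x j))"
proof -
  have L_finite: "\<forall>i\<in>V. finite (L i)"
    using assms(11) by (meson finite_atLeastAtMost finite_subset)
  have "\<forall>i\<in>V. L i \<subseteq> {1..k} \<and> q \<le> card (L i)"
  proof
    fix i assume "i \<in> V"
    then obtain S where "L i \<subseteq> {1..k}" "nearest_q k q d i S" "S \<subseteq> L i"
      using assms(11) by blast
    then show "L i \<subseteq> {1..k} \<and> q \<le> card (L i)" by (simp add: card_candidates_ge)
  qed
  from coloring_from_candidates[OF assms(1,3,8,9) this] obtain col
    where "\<forall>i\<in>V. col i \<in> L i" "\<forall>i j. {i, j} \<in> ECL \<longrightarrow> col i \<noteq> col j"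
    by blast
  then have "RMBLP_feasible V L ECL ESCL ESML2
      (\<lambda>i l. if l = col i then 1 else 0) (\<lambda>_. 1) (\<lambda>_. 1)"
    using L_finite by (intro RMBLP_feasible_indicator) auto
  then have "\<exists>x y z. RMBLP_feasible V L ECL ESCL ESML2 x y z" by (intro exI)
  moreover have "(\<forall>i\<in>V. assigned L x i \<in> L i \<and> x i (assigned L x i) = 1) \<and>
      (\<forall>i j. {i, j} \<in> ECL \<longrightarrow> assigned L x i \<noteq> assigned L x j)"
    if feasible: "RMBLP_feasible V L ECL ESCL ESML2 x y z" for x y z
    using RMBLP_feasible_assigned[OF feasible] L_finite
      RMBLP_feasible_assigned_cannot_link[OF feasible assms(3) L_finite] by simp
  ultimately show ?thesis by blast
qed

end
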